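(* With the notation of the context, for all admissible fixed frequencies, $$|S_{kk_1}|\lesssim (N_2\wedge N_3)^{2-\alpha}\langle k_1-k\rangle^{-1}+1,\qquad |S_{kk_3}|\lesssim (N_1\wedge N_2)^{2-\alpha}\langle k-k_3\rangle^{-1}+1,$$ $$|S_{k_1k_2}|\lesssim N_3^{2-\alpha}\langle k_1-k_2\rangle^{-1}+1,\qquad |S_{k_2k_3}|\lesssim N_1^{2-\alpha}\langle k_2-k_3\rangle^{-1}+1.$$
   Context: Fix $\alpha\in(1,2)$, dyadic numbers $1\le N_1,N_2,N_3\le N$, a real number $m$ and a constant $C_0>0$. Let $S$ be the set of $(k,k_1,k_2,k_3)\in\mathbb Z^4$ with $k=k_1-k_2+k_3$, $k_2\notin\{k_1,k_3\}$, $\big||k_1|^\alpha-|k_2|^\alpha+|k_3|^\alpha-|k|^\alpha-m\big|\le C_0$, $|k|\le N$ and $|k_j|\le N_j$ for $j=1,2,3$. When some of the variables are fixed, $S$ with those variables as subscripts denotes the set of the remaining variables for which the quadruple lies in $S$ (e.g. $S_{kk_1}=\{(k_2,k_3):(k,k_1,k_2,k_3)\in S\}$, $S_k=\{(k_1,k_2,k_3):(k,k_1,k_2,k_3)\in S\}$). $|A|$ is the cardinality of $A$, $\langle x\rangle=(1+|x|^2)^{1/2}$, $a\wedge b=\min(a,b)$, $a\vee b=\max(a,b)$. $A\lesssim B$ means $A\le CB$ with $C$ depending only on $\alpha$ and $C_0$ (uniform in $m$, the $N$'s and the fixed frequencies). *)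

theory Defs
  imports Complex_Main
begin

definition dyadic :: "real \<Rightarrow> bool" where
  "dyadic N \<longleftrightarrow> (\<exists>j::nat. N = 2 ^ j)"

definition jbr :: "real \<Rightarrow> real" where
  "jbr x = sqrt (1 + x\<^sup>2)"

definition Sset :: "real \<Rightarrow> real \<Rightarrow> real \<Rightarrow> real \<Rightarrow> real \<Rightarrow> real \<Rightarrow> real
    \<Rightarrow> (int \<times> int \<times> int \<times> int) set" where
  "Sset \<alpha> C0 m N N1 N2 N3 =
     {(k, k1, k2, k3). k = k1 - k2 + k3 \<and> k2 \<noteq> k1 \<and> k2 \<noteq> k3 \<and>
        \<bar>\<bar>real_of_int k1\<bar> powr \<alpha> - \<bar>real_of_int k2\<bar> powr \<alpha> + \<bar>real_of_int k3\<bar> powr \<alpha>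
          - \<bar>real_of_int k\<bar> powr \<alpha> - m\<bar> \<le> C0 \<and>
        \<bar>real_of_int k\<bar> \<le> N \<and> \<bar>real_of_int k1\<bar> \<le> N1 \<and>
        \<bar>real_of_int k2\<bar> \<le> N2 \<and> \<bar>real_of_int k3\<bar> \<le> N3}"

end

theory Submission
  imports Defs
begin

(* Fixing two of the four frequencies leaves a pair (v, u) of free frequencies with v - u = d,
   where d is (up to sign) the difference of the fixed ones and d \<noteq> 0 since k2 \<notin> {k1, k3}.
   The fibre is thus parametrised by u alone, and the resonance condition says that the phase gap
   |u + d|^alpha - |u|^alpha lies in an interval of length 2 C0.  For d > 0 the mean value
   theorem, combined with a lower bound for the increments of the odd power s |-> sgn s |s|^(alpha-1),
   shows that the phase gap grows by at least alpha (alpha - 1) d (2 M + d)^(alpha - 2) per unit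
   step, where M bounds |u| and |v|.  So the fibre has at most
   1 + 2 C0 (2 M + d)^(2 - alpha) / (alpha (alpha - 1) d) elements, and subadditivity of
   t |-> t^(2 - alpha) turns this into the bound M^(2 - alpha) / <d> + 1.  Exchanging u and v
   handles d < 0. *)

lemma has_real_derivative_abs_powr:
  fixes a t :: real
  assumes "t \<noteq> 0"
  shows "((\<lambda>s. \<bar>s\<bar> powr a) has_real_derivative a * sgn t * \<bar>t\<bar> powr (a - 1)) (at t)"
proof (cases "t > 0")
  case True
  have "eventually (\<lambda>s. s \<in> {0<..}) (nhds t)"
    by (rule eventually_nhds_in_open) (auto simp: True)
  then have "eventually (\<lambda>s. \<bar>s\<bar> powr a = s powr a) (nhds t)"
    by eventually_elim auto
  then show ?thesis
    using has_real_derivative_powr[OF True, of a] True by (simp add: DERIV_cong_ev)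
next
  case False
  with assms have "t < 0" by simp
  have "eventually (\<lambda>s. s \<in> {..<0}) (nhds t)"
    by (rule eventually_nhds_in_open) (auto simp: \<open>t < 0\<close>)
  then have "eventually (\<lambda>s. \<bar>s\<bar> powr a = (- s) powr a) (nhds t)"
    by eventually_elim auto
  moreover have "((\<lambda>s. (- s) powr a) has_real_derivative a * (- t) powr (a - of_nat 1) * (- 1)) (at t)"
    by (rule DERIV_fun_powr) (auto intro!: derivative_eq_intros simp: \<open>t < 0\<close>)
  ultimately show ?thesis
    using \<open>t < 0\<close> by (simp add: DERIV_cong_ev)
qed

lemma powr_diff_ge:
  fixes a b \<beta> :: real
  assumes "0 \<le> a" "a < b" "0 < \<beta>" "\<beta> \<le> 1"
  shows "\<beta> * (b - a) * (a + b) powr (\<beta> - 1) \<le> b powr \<beta> - a powr \<beta>"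
proof -
  have "continuous_on {a..b} (\<lambda>s. s powr \<beta>)"
    by (rule continuous_on_powr') (use assms in \<open>auto intro!: continuous_intros\<close>)
  moreover have "(\<lambda>s. s powr \<beta>) differentiable (at x)" if "a < x" for x
    using has_real_derivative_powr[of x \<beta>] that assms real_differentiable_def by force
  ultimately obtain l z where z: "a < z" "z < b" "((\<lambda>s. s powr \<beta>) has_real_derivative l) (at z)"
      and mvt: "b powr \<beta> - a powr \<beta> = (b - a) * l"
    using MVT[OF \<open>a < b\<close>] by blast
  have "0 < z" using z assms by linarith
  then have "l = \<beta> * z powr (\<beta> - 1)"
    using DERIV_unique[OF z(3) has_real_derivative_powr] by blast
  moreover have "(a + b) powr (\<beta> - 1) \<le> z powr (\<beta> - 1)"
    by (rule powr_mono2') (use assms z in auto)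
  ultimately show ?thesis
    using mvt assms z by (simp add: mult_left_mono mult.assoc)
qed

lemma powr_add_le_add_powr:
  fixes x y \<beta> :: real
  assumes "0 \<le> x" "0 \<le> y" "0 < \<beta>" "\<beta> \<le> 1"
  shows "(x + y) powr \<beta> \<le> x powr \<beta> + y powr \<beta>"
proof (cases "x + y = 0")
  case True
  then show ?thesis using assms by simp
next
  case False
  then have "0 < x + y" using assms by simp
  have weight: "(x + y) powr (\<beta> - 1) * w \<le> w powr \<beta>" if "0 \<le> w" "w \<le> x + y" for w
  proof (cases "w = 0")
    case False
    with that have "(x + y) powr (\<beta> - 1) \<le> w powr (\<beta> - 1)"
      by (intro powr_mono2') (use assms in auto)
    with False that show ?thesis by (simp add: powr_diff field_simps)
  qed simp
  have "(x + y) powr \<beta> = (x + y) powr (\<beta> - 1) * (x + y)"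
    using \<open>0 < x + y\<close> by (simp add: powr_diff)
  also have "\<dots> = (x + y) powr (\<beta> - 1) * x + (x + y) powr (\<beta> - 1) * y"
    by (simp add: distrib_left)
  also have "\<dots> \<le> x powr \<beta> + y powr \<beta>"
    using weight[of x] weight[of y] assms by simp
  finally show ?thesis .
qed

lemma sgn_powr_diff_ge:
  fixes a b \<beta> :: real
  assumes "a < b" "0 < \<beta>" "\<beta> \<le> 1"
  shows "\<beta> * (b - a) * (\<bar>a\<bar> + \<bar>b\<bar>) powr (\<beta> - 1)
          \<le> sgn b * \<bar>b\<bar> powr \<beta> - sgn a * \<bar>a\<bar> powr \<beta>"
proof -
  consider "0 \<le> a" | "b \<le> 0" | "a < 0" "0 < b" by linarith
  then show ?thesis
  proof cases
    case 1
    then show ?thesis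
      using powr_diff_ge[OF 1 assms] assms by (cases "a = 0") auto
  next
    case 2
    then show ?thesis
      using powr_diff_ge[of "\<bar>b\<bar>" "\<bar>a\<bar>" \<beta>] assms by (cases "b = 0") (auto simp: add.commute)
  next
    case 3
    have "\<beta> * ((b - a) * (\<bar>a\<bar> + \<bar>b\<bar>) powr (\<beta> - 1)) \<le> (b - a) * (\<bar>a\<bar> + \<bar>b\<bar>) powr (\<beta> - 1)"
      using assms 3 by (intro mult_left_le_one_le) auto
    also have "\<dots> = (\<bar>a\<bar> + b) powr \<beta>"
      using 3 by (simp add: powr_diff)
    also have "\<dots> \<le> \<bar>a\<bar> powr \<beta> + b powr \<beta>"
      using powr_add_le_add_powr[of "\<bar>a\<bar>" b \<beta>] 3 assms by simp
    finally show ?thesis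
      using 3 by (simp add: mult.assoc)
  qed
qed

definition phase_gap :: "real \<Rightarrow> real \<Rightarrow> real \<Rightarrow> real" where
  "phase_gap \<alpha> d s = \<bar>s + d\<bar> powr \<alpha> - \<bar>s\<bar> powr \<alpha>"

lemma phase_gap_step_ge:
  fixes \<alpha> A B :: real and z d :: int
  assumes "1 < \<alpha>" "\<alpha> \<le> 2" "0 < d"
    and "\<bar>real_of_int z\<bar> \<le> A" "\<bar>real_of_int z + 1\<bar> \<le> A"
    and "\<bar>real_of_int z + d\<bar> \<le> B" "\<bar>real_of_int z + 1 + d\<bar> \<le> B"
  shows "\<alpha> * (\<alpha> - 1) * d * (2 * min A B + d) powr (\<alpha> - 2)
          \<le> phase_gap \<alpha> d (z + 1) - phase_gap \<alpha> d z"
proof -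
  define f' where
    "f' \<xi> = \<alpha> * (sgn (\<xi> + d) * \<bar>\<xi> + d\<bar> powr (\<alpha> - 1) - sgn \<xi> * \<bar>\<xi>\<bar> powr (\<alpha> - 1))"
    for \<xi> :: real
  \<comment> \<open>The kinks of \<open>phase_gap \<alpha> d\<close> sit at the integers \<open>0\<close> and \<open>-d\<close>, so none lies strictly
     between \<open>z\<close> and \<open>z + 1\<close>.\<close>
  have not_int: "\<xi> \<noteq> of_int n"
    if "real_of_int z < \<xi>" "\<xi> < real_of_int z + 1" for \<xi> :: real and n
  proof
    assume "\<xi> = of_int n"
    with that have "z < n" "n < z + 1" by simp_all
    then show False by simp
  qed
  have deriv: "(phase_gap \<alpha> d has_real_derivative f' \<xi>) (at \<xi>)"
    if "real_of_int z < \<xi>" "\<xi> < real_of_int z + 1" for \<xi>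
  proof -
    have "\<xi> \<noteq> 0" "\<xi> + d \<noteq> 0"
      using not_int[OF that, of 0] not_int[OF that, of "- d"] by auto
    have "((\<lambda>s. \<bar>s + d\<bar> powr \<alpha>) has_real_derivative
        \<alpha> * sgn (\<xi> + d) * \<bar>\<xi> + d\<bar> powr (\<alpha> - 1) * 1) (at \<xi>)"
      by (rule DERIV_chain2[where g = "\<lambda>s. s + d" and x = \<xi>,
            OF has_real_derivative_abs_powr[OF \<open>\<xi> + d \<noteq> 0\<close>]])
        (auto intro!: derivative_eq_intros)
    from DERIV_diff[OF this has_real_derivative_abs_powr[OF \<open>\<xi> \<noteq> 0\<close>, of \<alpha>]]
    show ?thesis
      unfolding phase_gap_def[abs_def] f'_def by (simp add: right_diff_distrib mult.assoc)
  qed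
  have "continuous_on {real_of_int z..z + 1} (phase_gap \<alpha> d)"
    unfolding phase_gap_def[abs_def]
    by (intro continuous_intros continuous_on_powr') (use assms in auto)
  moreover have "phase_gap \<alpha> d differentiable (at \<xi>)"
    if "real_of_int z < \<xi>" "\<xi> < real_of_int z + 1" for \<xi>
    using deriv[OF that] real_differentiable_def by blast
  ultimately obtain l \<xi> :: real where \<xi>: "real_of_int z < \<xi>" "\<xi> < real_of_int z + 1"
      and l: "(phase_gap \<alpha> d has_real_derivative l) (at \<xi>)"
      and mvt: "phase_gap \<alpha> d (z + 1) - phase_gap \<alpha> d z = (z + 1 - z) * l"
    using MVT[of z "z + 1" "phase_gap \<alpha> d"] by auto
  have "l = f' \<xi>"
    using DERIV_unique[OF l deriv[OF \<xi>]] .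
  have "\<bar>\<xi>\<bar> + \<bar>\<xi> + d\<bar> \<le> 2 * min A B + d" "0 < \<bar>\<xi>\<bar> + \<bar>\<xi> + d\<bar>"
    using assms \<xi> by linarith+
  then have "(2 * min A B + d) powr (\<alpha> - 2) \<le> (\<bar>\<xi>\<bar> + \<bar>\<xi> + d\<bar>) powr (\<alpha> - 2)"
    by (intro powr_mono2') (use assms in auto)
  then have "\<alpha> * (\<alpha> - 1) * d * (2 * min A B + d) powr (\<alpha> - 2)
        \<le> \<alpha> * ((\<alpha> - 1) * d * (\<bar>\<xi>\<bar> + \<bar>\<xi> + d\<bar>) powr (\<alpha> - 1 - 1))"
    using assms by (simp add: mult.assoc mult_left_mono)
  also have "\<dots> \<le> f' \<xi>"
    unfolding f'_def using sgn_powr_diff_ge[of \<xi> "\<xi> + d" "\<alpha> - 1"] assms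
    by (intro mult_left_mono) auto
  finally show ?thesis
    using mvt \<open>l = f' \<xi>\<close> by simp
qed

lemma diff_ge_of_increments_ge:
  fixes f :: "int \<Rightarrow> real"
  assumes "x \<le> y" "\<And>z. x \<le> z \<Longrightarrow> z < y \<Longrightarrow> \<delta> \<le> f (z + 1) - f z"
  shows "\<delta> * of_int (y - x) \<le> f y - f x"
  using assms
proof (induction y rule: int_ge_induct)
  case (step y)
  then have "\<delta> * of_int (y - x) \<le> f y - f x" "\<delta> \<le> f (y + 1) - f y"
    by auto
  then show ?case
    by (simp add: algebra_simps)
qed simp

lemma phase_gap_diff_ge:
  fixes \<alpha> A B :: real and x y d :: int
  assumes "1 < \<alpha>" "\<alpha> \<le> 2" "0 < d" "x \<le> y"
    and "\<bar>real_of_int x\<bar> \<le> A" "\<bar>real_of_int x + d\<bar> \<le> B"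
    and "\<bar>real_of_int y\<bar> \<le> A" "\<bar>real_of_int y + d\<bar> \<le> B"
  shows "\<alpha> * (\<alpha> - 1) * d * (2 * min A B + d) powr (\<alpha> - 2) * (y - x)
          \<le> phase_gap \<alpha> d y - phase_gap \<alpha> d x"
proof -
  have "\<alpha> * (\<alpha> - 1) * d * (2 * min A B + d) powr (\<alpha> - 2)
          \<le> phase_gap \<alpha> d (z + 1) - phase_gap \<alpha> d z"
    if "x \<le> z" "z < y" for z
    using phase_gap_step_ge[OF assms(1-3)] that assms(5-) by simp
  from diff_ge_of_increments_ge[where f = "\<lambda>z. phase_gap \<alpha> d z", OF \<open>x \<le> y\<close> this]
  show ?thesis by simp
qed

lemma card_le_of_spread:
  fixes f :: "int \<Rightarrow> real"
  assumes "finite T" "0 < \<delta>" "0 \<le> r"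
    and spread: "\<And>x y. x \<in> T \<Longrightarrow> y \<in> T \<Longrightarrow> x \<le> y \<Longrightarrow> \<delta> * of_int (y - x) \<le> f y - f x"
    and level: "\<And>x. x \<in> T \<Longrightarrow> \<bar>f x - c\<bar> \<le> r"
  shows "real (card T) \<le> 2 * r / \<delta> + 1"
proof (cases "T = {}")
  case True
  then show ?thesis using assms by simp
next
  case False
  define x0 where "x0 = Min T"
  have "x0 \<in> T" unfolding x0_def using assms False by simp
  have "T \<subseteq> {x0..x0 + \<lfloor>2 * r / \<delta>\<rfloor>}"
  proof
    fix y assume "y \<in> T"
    then have "x0 \<le> y" unfolding x0_def using assms by simp
    have "\<delta> * of_int (y - x0) \<le> 2 * r"
      using spread[OF \<open>x0 \<in> T\<close> \<open>y \<in> T\<close> \<open>x0 \<le> y\<close>] level[OF \<open>x0 \<in> T\<close>] level[OF \<open>y \<in> T\<close>]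
      by linarith
    then have "y - x0 \<le> \<lfloor>2 * r / \<delta>\<rfloor>"
      using \<open>0 < \<delta>\<close> by (simp add: le_floor_iff field_simps)
    with \<open>x0 \<le> y\<close> show "y \<in> {x0..x0 + \<lfloor>2 * r / \<delta>\<rfloor>}" by simp
  qed
  then have "real (card T) \<le> real (nat (\<lfloor>2 * r / \<delta>\<rfloor> + 1))"
    using card_mono[of "{x0..x0 + \<lfloor>2 * r / \<delta>\<rfloor>}" T] by simp
  also have "\<dots> \<le> 2 * r / \<delta> + 1"
    using assms by (simp add: of_nat_nat)
  finally show ?thesis .
qed

lemma finite_int_abs_le: "finite {x::int. \<bar>real_of_int x\<bar> \<le> A}"
proof (rule finite_subset)
  show "{x::int. \<bar>real_of_int x\<bar> \<le> A} \<subseteq> {-\<lceil>A\<rceil>..\<lceil>A\<rceil>}"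
    by (auto simp: abs_le_iff ceiling_le_iff le_ceiling_iff) linarith+
qed simp

lemma card_phase_gap_level_set_le:
  fixes \<alpha> A B C0 c :: real and d :: int
  assumes "1 < \<alpha>" "\<alpha> \<le> 2" "0 < d" "0 \<le> C0" "0 \<le> A" "0 \<le> B"
  shows "real (card {x::int. \<bar>real_of_int x\<bar> \<le> A \<and> \<bar>real_of_int x + d\<bar> \<le> B
                          \<and> \<bar>phase_gap \<alpha> d x - c\<bar> \<le> C0})
          \<le> 2 * C0 / (\<alpha> * (\<alpha> - 1) * d * (2 * min A B + d) powr (\<alpha> - 2)) + 1"
proof (rule card_le_of_spread[where f = "\<lambda>x. phase_gap \<alpha> d x"])
  show "finite {x::int. \<bar>real_of_int x\<bar> \<le> A \<and> \<bar>real_of_int x + d\<bar> \<le> B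
                      \<and> \<bar>phase_gap \<alpha> d x - c\<bar> \<le> C0}"
    by (rule finite_subset[OF _ finite_int_abs_le[of A]]) auto
  show "0 < \<alpha> * (\<alpha> - 1) * d * (2 * min A B + d) powr (\<alpha> - 2)"
    using assms by simp
qed (use assms phase_gap_diff_ge[OF assms(1-3)] in auto)

lemma jbr_pos: "0 < jbr x"
  unfolding jbr_def by (simp add: add_pos_nonneg)

lemma jbr_minus: "jbr (- x) = jbr x"
  unfolding jbr_def by simp

lemma jbr_le_abs_add_one: "jbr x \<le> 1 + \<bar>x\<bar>"
  unfolding jbr_def by (rule real_le_lsqrt) (auto simp: power2_eq_square algebra_simps)

lemma resonance_count_bound_le:
  fixes \<alpha> C0 m d :: real
  assumes "1 < \<alpha>" "\<alpha> < 2" "0 \<le> C0" "0 \<le> m" "1 \<le> d"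
  shows "2 * C0 / (\<alpha> * (\<alpha> - 1) * d * (2 * m + d) powr (\<alpha> - 2)) + 1
          \<le> (8 * C0 / (\<alpha> * (\<alpha> - 1)) + 1) * (m powr (2 - \<alpha>) / jbr d + 1)"
proof -
  define E where "E = \<alpha> * (\<alpha> - 1)"
  define W where "W = m powr (2 - \<alpha>) / jbr d"
  have "0 < E" "0 \<le> W"
    unfolding E_def W_def using assms jbr_pos[of d] by simp_all
  have "(2 * m + d) powr (2 - \<alpha>) \<le> (2 * m) powr (2 - \<alpha>) + d powr (2 - \<alpha>)"
    using powr_add_le_add_powr[of "2 * m" d "2 - \<alpha>"] assms by simp
  also have "\<dots> \<le> 2 * m powr (2 - \<alpha>) + d"
  proof -
    have "2 powr (2 - \<alpha>) \<le> 2" "d powr (2 - \<alpha>) \<le> d"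
      using powr_mono[of "2 - \<alpha>" 1 2] powr_mono[of "2 - \<alpha>" 1 d] assms by simp_all
    then show ?thesis
      using mult_right_mono[of "2 powr (2 - \<alpha>)" 2 "m powr (2 - \<alpha>)"] assms
      by (simp add: powr_mult)
  qed
  finally have "(2 * m + d) powr (2 - \<alpha>) / d \<le> (2 * m powr (2 - \<alpha>) + d) / d"
    using assms by (simp add: divide_right_mono)
  also have "\<dots> = 2 * m powr (2 - \<alpha>) / d + 1"
    using assms by (simp add: add_divide_distrib)
  also have "\<dots> \<le> 4 * W + 1"
  proof -
    have "1 / d \<le> 2 / jbr d"
      using jbr_le_abs_add_one[of d] jbr_pos[of d] assms by (simp add: field_simps)
    then show ?thesis
      unfolding W_def using assms mult_left_mono[of "1 / d" "2 / jbr d" "m powr (2 - \<alpha>)"] by simp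
  qed
  finally have gap: "(2 * m + d) powr (2 - \<alpha>) / d \<le> 4 * W + 1" .
  have "2 * C0 / (E * d * (2 * m + d) powr (\<alpha> - 2)) = 2 * C0 / E * ((2 * m + d) powr (2 - \<alpha>) / d)"
    using assms by (simp add: powr_diff field_simps)
  also have "\<dots> \<le> 2 * C0 / E * (4 * W + 1)"
    by (rule mult_left_mono[OF gap]) (use \<open>0 < E\<close> assms in simp)
  also have "\<dots> \<le> 8 * C0 / E * (W + 1)"
    using \<open>0 < E\<close> \<open>0 \<le> W\<close> assms by (simp add: field_simps)
  finally show ?thesis
    unfolding E_def[symmetric] W_def[symmetric] using \<open>0 \<le> W\<close> by (simp add: algebra_simps)
qed

definition resonant_pairs :: "real \<Rightarrow> real \<Rightarrow> real \<Rightarrow> int \<Rightarrow> real \<Rightarrow> real \<Rightarrow> (int \<times> int) set" where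
  "resonant_pairs \<alpha> C0 c d V U =
     {(v, u). v - u = d \<and> v \<noteq> u \<and> \<bar>real_of_int v\<bar> \<le> V \<and> \<bar>real_of_int u\<bar> \<le> U \<and>
        \<bar>\<bar>real_of_int v\<bar> powr \<alpha> - \<bar>real_of_int u\<bar> powr \<alpha> - c\<bar> \<le> C0}"

lemma finite_resonant_pairs: "finite (resonant_pairs \<alpha> C0 c d V U)"
proof (rule finite_subset)
  show "resonant_pairs \<alpha> C0 c d V U \<subseteq> {v. \<bar>real_of_int v\<bar> \<le> V} \<times> {u. \<bar>real_of_int u\<bar> \<le> U}"
    unfolding resonant_pairs_def by auto
qed (simp add: finite_int_abs_le)

lemma resonant_pairs_eq_image:
  assumes "d \<noteq> 0"
  shows "resonant_pairs \<alpha> C0 c d V U = (\<lambda>x. (x + d, x)) `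
    {x. \<bar>real_of_int x\<bar> \<le> U \<and> \<bar>real_of_int x + d\<bar> \<le> V \<and> \<bar>phase_gap \<alpha> d x - c\<bar> \<le> C0}"
  using assms unfolding resonant_pairs_def phase_gap_def by (auto simp: add.commute)

lemma resonant_pairs_swap:
  "resonant_pairs \<alpha> C0 c d V U = prod.swap ` resonant_pairs \<alpha> C0 (- c) (- d) U V"
  unfolding resonant_pairs_def by (auto simp: abs_minus_commute image_iff)

lemma card_resonant_pairs_pos_le:
  assumes "1 < \<alpha>" "\<alpha> < 2" "0 \<le> C0" "0 \<le> V" "0 \<le> U" "0 < d"
  shows "real (card (resonant_pairs \<alpha> C0 c d V U))
          \<le> (8 * C0 / (\<alpha> * (\<alpha> - 1)) + 1) * (min V U powr (2 - \<alpha>) / jbr d + 1)"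
proof -
  have "card (resonant_pairs \<alpha> C0 c d V U) =
    card {x. \<bar>real_of_int x\<bar> \<le> U \<and> \<bar>real_of_int x + d\<bar> \<le> V \<and> \<bar>phase_gap \<alpha> d x - c\<bar> \<le> C0}"
    unfolding resonant_pairs_eq_image[OF order.strict_implies_not_eq[OF assms(6), symmetric]]
    by (rule card_image) (simp add: inj_on_def)
  also have "real \<dots> \<le> 2 * C0 / (\<alpha> * (\<alpha> - 1) * d * (2 * min U V + d) powr (\<alpha> - 2)) + 1"
    using card_phase_gap_level_set_le assms by simp
  also have "\<dots> \<le> (8 * C0 / (\<alpha> * (\<alpha> - 1)) + 1) * (min U V powr (2 - \<alpha>) / jbr d + 1)"
    using resonance_count_bound_le assms by simp
  finally show ?thesis
    by (simp add: min.commute)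
qed

lemma card_resonant_pairs_le:
  assumes "1 < \<alpha>" "\<alpha> < 2" "0 \<le> C0" "0 \<le> V" "0 \<le> U"
  shows "real (card (resonant_pairs \<alpha> C0 c d V U))
          \<le> (8 * C0 / (\<alpha> * (\<alpha> - 1)) + 1) * (min V U powr (2 - \<alpha>) / jbr d + 1)"
proof -
  consider "d = 0" | "0 < d" | "d < 0" by linarith
  then show ?thesis
  proof cases
    case 1
    then have "resonant_pairs \<alpha> C0 c d V U = {}"
      unfolding resonant_pairs_def by auto
    then show ?thesis
      using assms jbr_pos[of d] by simp
  next
    case 2
    then show ?thesis
      using card_resonant_pairs_pos_le assms by simp
  next
    case 3
    have "card (resonant_pairs \<alpha> C0 c d V U) = card (resonant_pairs \<alpha> C0 (- c) (- d) U V)"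
      unfolding resonant_pairs_swap[of \<alpha> C0 c d] by (rule card_image) simp
    then show ?thesis
      using card_resonant_pairs_pos_le[of \<alpha> C0 U V "- d" "- c"] assms 3
      by (simp add: min.commute jbr_minus)
  qed
qed

theorem lemma2p5:
  fixes \<alpha> C0 :: real
  assumes "1 < \<alpha>" "\<alpha> < 2" "0 < C0"
  shows "\<exists>C>0. \<forall>m N N1 N2 N3.
    dyadic N \<and> dyadic N1 \<and> dyadic N2 \<and> dyadic N3 \<and>
    1 \<le> N1 \<and> N1 \<le> N \<and> 1 \<le> N2 \<and> N2 \<le> N \<and> 1 \<le> N3 \<and> N3 \<le> N \<longrightarrow>
    (\<forall>k k1. real (card {(k2, k3). (k, k1, k2, k3) \<in> Sset \<alpha> C0 m N N1 N2 N3})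
        \<le> C * ((min N2 N3) powr (2 - \<alpha>) / jbr (real_of_int (k1 - k)) + 1)) \<and>
    (\<forall>k k3. real (card {(k1, k2). (k, k1, k2, k3) \<in> Sset \<alpha> C0 m N N1 N2 N3})
        \<le> C * ((min N1 N2) powr (2 - \<alpha>) / jbr (real_of_int (k - k3)) + 1)) \<and>
    (\<forall>k1 k2. real (card {(k, k3). (k, k1, k2, k3) \<in> Sset \<alpha> C0 m N N1 N2 N3})
        \<le> C * (N3 powr (2 - \<alpha>) / jbr (real_of_int (k1 - k2)) + 1)) \<and>
    (\<forall>k2 k3. real (card {(k, k1). (k, k1, k2, k3) \<in> Sset \<alpha> C0 m N N1 N2 N3})
        \<le> C * (N1 powr (2 - \<alpha>) / jbr (real_of_int (k2 - k3)) + 1))"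
proof (intro exI conjI allI impI)
  define K where "K = 8 * C0 / (\<alpha> * (\<alpha> - 1)) + 1"
  show "0 < K"
    unfolding K_def using assms by (simp add: add_nonneg_pos)
  have card_le: "real (card P) \<le> K * (min V U powr (2 - \<alpha>) / jbr d + 1)"
    if "P \<subseteq> resonant_pairs \<alpha> C0 c d V U" "0 \<le> V" "0 \<le> U" for P c d V U
    using card_mono[OF finite_resonant_pairs that(1)] card_resonant_pairs_le[of \<alpha> C0 V U c d]
      assms that(2,3) unfolding K_def by linarith
  fix m N N1 N2 N3 :: real and k k1 k2 k3 :: int
  let ?S = "Sset \<alpha> C0 m N N1 N2 N3"
  let ?h = "\<lambda>x::int. \<bar>real_of_int x\<bar> powr \<alpha>"
  assume "dyadic N \<and> dyadic N1 \<and> dyadic N2 \<and> dyadic N3 \<and>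
    1 \<le> N1 \<and> N1 \<le> N \<and> 1 \<le> N2 \<and> N2 \<le> N \<and> 1 \<le> N3 \<and> N3 \<le> N"
  then have N: "1 \<le> N1" "N1 \<le> N" "1 \<le> N2" "1 \<le> N3" "N3 \<le> N" by auto
  have "{(k2, k3). (k, k1, k2, k3) \<in> ?S} \<subseteq> resonant_pairs \<alpha> C0 (?h k1 - ?h k - m) (k1 - k) N2 N3"
    by (auto simp: Sset_def resonant_pairs_def abs_le_iff)
  from card_le[OF this] N
  show "real (card {(k2, k3). (k, k1, k2, k3) \<in> ?S})
        \<le> K * ((min N2 N3) powr (2 - \<alpha>) / jbr (real_of_int (k1 - k)) + 1)" by simp
  have "{(k1, k2). (k, k1, k2, k3) \<in> ?S} \<subseteq> resonant_pairs \<alpha> C0 (?h k - ?h k3 + m) (k - k3) N1 N2"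
    by (auto simp: Sset_def resonant_pairs_def abs_le_iff)
  from card_le[OF this] N
  show "real (card {(k1, k2). (k, k1, k2, k3) \<in> ?S})
        \<le> K * ((min N1 N2) powr (2 - \<alpha>) / jbr (real_of_int (k - k3)) + 1)" by simp
  have "{(k, k3). (k, k1, k2, k3) \<in> ?S} \<subseteq> resonant_pairs \<alpha> C0 (?h k1 - ?h k2 - m) (k1 - k2) N N3"
    by (auto simp: Sset_def resonant_pairs_def abs_le_iff)
  from card_le[OF this] N
  show "real (card {(k, k3). (k, k1, k2, k3) \<in> ?S})
        \<le> K * (N3 powr (2 - \<alpha>) / jbr (real_of_int (k1 - k2)) + 1)" by simp
  have "{(k, k1). (k, k1, k2, k3) \<in> ?S} \<subseteq> resonant_pairs \<alpha> C0 (?h k3 - ?h k2 - m) (k3 - k2) N N1"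
    by (auto simp: Sset_def resonant_pairs_def abs_le_iff)
  from card_le[OF this] N jbr_minus[of "k2 - k3"]
  show "real (card {(k, k1). (k, k1, k2, k3) \<in> ?S})
        \<le> K * (N1 powr (2 - \<alpha>) / jbr (real_of_int (k2 - k3)) + 1)" by simp
qed

end
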